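(* Let $m$ be a positive integer, $n=2m$, let $s$ be an integer with $\gcd(s,3^m+1)=1$, and let $a\in\mathbb{F}_{3^n}^*$. Define $f:\mathbb{F}_{3^n}\to\mathbb{F}_3$ by $f(0)=0$ and $$f(x)=\sum_{i=1}^{\frac{3^m+1}{2}-1}{\rm Tr}_1^n\big(ax^{(2i+s)(3^m-1)}\big).$$ Then $f$ is regular bent if and only if $K_m(a^{3^m+1})=0$.
   Context: $\omega=e^{2\pi\sqrt{-1}/3}$. ${\rm Tr}_k^t$ is the trace map from $\mathbb{F}_{3^t}$ to $\mathbb{F}_{3^k}$. $K_m(\beta)=\sum_{x\in\mathbb{F}_{3^m}}\omega^{{\rm Tr}_1^m(\beta x+x^{3^m-2})}$. For $f:\mathbb{F}_{3^n}\to\mathbb{F}_3$, $W_f(\lambda)=\sum_{x}\omega^{f(x)-{\rm Tr}_1^n(\lambda x)}$; $f$ is regular bent if for every $\lambda$, $W_f(\lambda)=3^{n/2}\omega^{f^*(\lambda)}$ for some function $f^*:\mathbb{F}_{3^n}\to\mathbb{F}_3$. *)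

theory Defs
  imports Complex_Main
begin

text \<open>The ambient finite field F_{3^n} is modelled by a finite field type 'a with
  CARD('a) = 3^n. Its prime field F_3 is {0,1,2} (images of naturals), and the
  subfield F_{3^k} is {x. x^(3^k) = x}.\<close>

definition omega :: complex where
  "omega = cis (2 * pi / 3)"

definition prime_field :: "'a::field set" where
  "prime_field = {of_nat k | k. k < 3}"

definition subfield_pow :: "nat \<Rightarrow> 'a::field set" where
  "subfield_pow k = {x. x ^ (3 ^ k) = x}"

text \<open>omega raised to an element of F_3 (identified with 0,1,2).\<close>
definition chi :: "'a::field \<Rightarrow> complex" where
  "chi t = (\<Sum>k<3::nat. if of_nat k = t then omega ^ k else 0)"

definition tr :: "nat \<Rightarrow> 'a::field \<Rightarrow> 'a" where
  "tr k y = (\<Sum>j<k. y ^ (3 ^ j))"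

definition kloosterman :: "nat \<Rightarrow> 'a::field \<Rightarrow> complex" where
  "kloosterman m \<beta> = (\<Sum>x\<in>subfield_pow m. chi (tr m (\<beta> * x + x ^ (3 ^ m - 2))))"

definition walsh :: "nat \<Rightarrow> ('a::{field,finite} \<Rightarrow> 'a) \<Rightarrow> 'a \<Rightarrow> complex" where
  "walsh n f l = (\<Sum>x\<in>UNIV. chi (f x - tr n (l * x)))"

definition regular_bent :: "nat \<Rightarrow> ('a::{field,finite} \<Rightarrow> 'a) \<Rightarrow> bool" where
  "regular_bent n f \<longleftrightarrow>
     (\<exists>fs :: 'a \<Rightarrow> 'a. (\<forall>l. fs l \<in> prime_field) \<and>
        (\<forall>l. walsh n f l = complex_of_real (sqrt (3 ^ n)) * chi (fs l)))"

end

theory Submission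
  imports Defs "HOL-Number_Theory.Residues" "HOL-Computational_Algebra.Polynomial"
begin

text \<open>Write \<open>q = 3\<^sup>m\<close>. The map \<open>x \<mapsto> x\<^sup>q\<^sup>-\<^sup>1\<close> sends the nonzero elements of \<open>F\<^bsub>q\<^sup>2\<^esub>\<close> onto
  the unit circle \<open>U = {u. u\<^sup>q\<^sup>+\<^sup>1 = 1}\<close>, with the cosets of \<open>F\<^sub>q\<^sup>*\<close> as fibres. Hence \<open>f(x) = g(x\<^sup>q\<^sup>-\<^sup>1)\<close>,
  and summing the Walsh transform over a fibre leaves an orthogonality relation over \<open>F\<^sub>q\<close>: with
  \<open>\<Lambda> = \<Sum>\<^sub>u\<^sub>\<in>\<^sub>U \<omega>^g(u)\<close> one gets \<open>W\<^sub>f(0) = 1 + (q - 1)\<Lambda>\<close> and \<open>W\<^sub>f(\<lambda>) = 1 - \<Lambda> + q \<omega>^g(-\<lambda>\<^sup>1\<^sup>-\<^sup>q)\<close>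
  for \<open>\<lambda> \<noteq> 0\<close>, and comparing \<open>W\<^sub>f(0)\<close> with \<open>W\<^sub>f(1)\<close> shows that \<open>f\<close> is regular bent iff \<open>\<Lambda> = 1\<close>.
  On \<open>U\<close> the geometric sum \<open>\<Sum>\<^sub>i u\<^sup>2\<^sup>i\<close> is \<open>-1\<close> except at \<open>u = \<plusminus>1\<close>, so up to swapping \<open>\<plusminus>1\<close>
  we have \<open>g(u) = Tr(-a u\<^sup>s)\<close>, and since \<open>s\<close> is invertible modulo \<open>q + 1\<close>,
  \<open>\<Lambda> = \<Sum>\<^sub>u\<^sub>\<in>\<^sub>U \<omega>^Tr(-a u)\<close>. Finally the elements of norm \<open>b = a\<^sup>q\<^sup>+\<^sup>1\<close> and trace \<open>c\<close>, together
  with the \<open>y \<in> F\<^sub>q\<^sup>*\<close> with \<open>y + b/y = c\<close>, are exactly two roots of \<open>w\<^sup>2 - c w + b\<close> for each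
  \<open>c \<in> F\<^sub>q\<close>, which gives \<open>\<Lambda> = 1 - K\<^sub>m(b)\<close>.\<close>

section \<open>Cube roots of unity\<close>

lemma omega_eq: "omega = Complex (-1/2) (sqrt 3 / 2)"
  unfolding omega_def by (simp add: cis.ctr cos_120 sin_120)

lemma omega_power2_eq: "omega ^ 2 = Complex (-1/2) (- sqrt 3 / 2)"
  unfolding omega_eq by (simp add: power2_eq_square complex_eq_iff)

lemma omega_power3: "omega ^ 3 = 1"
  unfolding omega_def DeMoivre by simp

lemma omega_power_mod_3: "omega ^ k = omega ^ (k mod 3)"
proof -
  have "omega ^ k = (omega ^ 3) ^ (k div 3) * omega ^ (k mod 3)"
    by (simp flip: power_mult power_add)
  then show ?thesis
    by (simp add: omega_power3)
qed

lemma omega_neq: "omega \<noteq> 1" "omega ^ 2 \<noteq> 1" "omega \<noteq> omega ^ 2"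
  unfolding omega_power2_eq by (auto simp: omega_eq complex_eq_iff)

lemma norm_cube_root_of_unity: "c \<in> {1, omega, omega ^ 2} \<Longrightarrow> cmod c = 1"
  by (auto simp: omega_def norm_power)

lemma norm_diff_cube_roots_of_unity_gt_1:
  assumes "c \<in> {1, omega, omega ^ 2}" "d \<in> {1, omega, omega ^ 2}" "c \<noteq> d"
  shows "cmod (c - d) > 1"
proof -
  have Re: "\<bar>Re z\<bar> > 1 \<Longrightarrow> cmod z > 1" and Im: "\<bar>Im z\<bar> > 1 \<Longrightarrow> cmod z > 1" for z
    using abs_Re_le_cmod[of z] abs_Im_le_cmod[of z] by linarith+
  have "cmod (1 - omega) > 1"
    by (rule Re) (simp add: omega_eq)
  moreover have "cmod (1 - omega ^ 2) > 1"
    by (rule Re) (simp add: omega_power2_eq)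
  moreover have "cmod (omega - omega ^ 2) > 1"
    by (rule Im, unfold omega_power2_eq) (simp add: omega_eq)
  ultimately show ?thesis
    using assms by (auto simp: norm_minus_commute)
qed

text \<open>The relations satisfied by \<open>W\<^sub>f(0)\<close> and \<open>W\<^sub>f(1)\<close> if \<open>f\<close> is regular bent: for \<open>L \<noteq> 1\<close>,
  \<open>c\<^sub>0 - 1 = (q - 1)(c\<^sub>2 - c\<^sub>1)\<close> would have norm at most 2 and greater than 2.\<close>

lemma cube_roots_relation_imp_eq_1:
  fixes q :: real and L :: complex
  assumes c: "c\<^sub>0 \<in> {1, omega, omega ^ 2}" "c\<^sub>1 \<in> {1, omega, omega ^ 2}" "c\<^sub>2 \<in> {1, omega, omega ^ 2}"
    and "q \<ge> 3"
    and at_0: "1 + (of_real q - 1) * L = of_real q * c\<^sub>0"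
    and at_1: "1 - L + of_real q * c\<^sub>2 = of_real q * c\<^sub>1"
  shows "L = 1"
proof (rule ccontr)
  assume "L \<noteq> 1"
  have L_eq: "L = 1 + of_real q * (c\<^sub>2 - c\<^sub>1)"
    using at_1 by (simp add: algebra_simps)
  with \<open>L \<noteq> 1\<close> have "c\<^sub>2 \<noteq> c\<^sub>1"
    by auto
  have "of_real q * (1 + (of_real q - 1) * (c\<^sub>2 - c\<^sub>1)) = of_real q * c\<^sub>0"
    using at_0 unfolding L_eq by (simp add: algebra_simps)
  then have "1 + (of_real q - 1) * (c\<^sub>2 - c\<^sub>1) = c\<^sub>0"
    using \<open>q \<ge> 3\<close> by (subst (asm) mult_left_cancel) auto
  then have "c\<^sub>0 - 1 = of_real (q - 1) * (c\<^sub>2 - c\<^sub>1)"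
    by (simp add: algebra_simps)
  then have "cmod (c\<^sub>0 - 1) = (q - 1) * cmod (c\<^sub>2 - c\<^sub>1)"
    using \<open>q \<ge> 3\<close> by (simp only: norm_mult norm_of_real)
  also have "\<dots> > 2 * 1"
    using norm_diff_cube_roots_of_unity_gt_1[OF c(3,2) \<open>c\<^sub>2 \<noteq> c\<^sub>1\<close>] \<open>q \<ge> 3\<close>
    by (intro mult_le_less_imp_less) auto
  moreover have "cmod (c\<^sub>0 - 1) \<le> 2"
    using norm_triangle_ineq4[of c\<^sub>0 1] norm_cube_root_of_unity[OF c(1)] by simp
  ultimately show False
    by simp
qed


section \<open>Fields of characteristic 3\<close>

lemma sum_lessThan_add: "(\<Sum>j<a + b. h j) = (\<Sum>j<a. h j) + (\<Sum>j<b. h (a + j))"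
  for h :: "nat \<Rightarrow> 'b::comm_monoid_add"
  by (induction b) (simp_all add: add_ac)

lemma tr_zero: "tr k (0::'a::field) = 0"
  by (simp add: tr_def power_0_left)

lemma subfield_pow_zero: "(0::'a::field) \<in> subfield_pow k"
  by (simp add: subfield_pow_def)

lemma subfield_pow_mult: "x \<in> subfield_pow k \<Longrightarrow> y \<in> subfield_pow k \<Longrightarrow> x * y \<in> subfield_pow k"
  by (simp add: subfield_pow_def power_mult_distrib)

lemma subfield_pow_inverse: "x \<in> subfield_pow k \<Longrightarrow> inverse x \<in> subfield_pow k"
  by (simp add: subfield_pow_def power_inverse)

lemma subfield_pow_divide: "x \<in> subfield_pow k \<Longrightarrow> y \<in> subfield_pow k \<Longrightarrow> x / y \<in> subfield_pow k"
  by (simp add: divide_inverse subfield_pow_mult subfield_pow_inverse)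

locale field_char_3 =
  fixes field_type :: "'a::field itself"
  assumes CHAR_eq_3: "CHAR('a) = 3"
begin

lemma three_eq_0: "(3::'a) = 0"
  using of_nat_CHAR[where 'a='a] by (simp add: CHAR_eq_3)

lemma of_nat_eq_iff_mod_3: "(of_nat i = (of_nat j :: 'a)) \<longleftrightarrow> i mod 3 = j mod 3"
  using of_nat_eq_iff_cong_CHAR[where 'a='a] by (simp add: CHAR_eq_3 cong_def)

lemma two_neq_0: "(2::'a) \<noteq> 0"
  using of_nat_eq_iff_mod_3[of 2 0] by simp

lemma minus_of_nat: "- (of_nat i :: 'a) = of_nat (2 * i)"
  using three_eq_0 by (simp add: eq_neg_iff_add_eq_0 flip: distrib_right)

lemma power_3_power_add: "(x + y :: 'a) ^ 3 ^ k = x ^ 3 ^ k + y ^ 3 ^ k"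
  by (rule freshmans_dream') (auto simp: CHAR_eq_3)

lemma power_3_power_sum: "(sum f A :: 'a) ^ 3 ^ k = (\<Sum>i\<in>A. f i ^ 3 ^ k)"
  by (rule freshmans_dream_sum') (auto simp: CHAR_eq_3)

lemma power_3_power_diff: "(x - y :: 'a) ^ 3 ^ k = x ^ 3 ^ k - y ^ 3 ^ k"
  using power_3_power_add[of x "- y" k] by simp

lemma subfield_pow_add: "x \<in> subfield_pow k \<Longrightarrow> y \<in> subfield_pow k \<Longrightarrow> (x + y :: 'a) \<in> subfield_pow k"
  by (simp add: subfield_pow_def power_3_power_add)

lemma subfield_pow_diff: "x \<in> subfield_pow k \<Longrightarrow> y \<in> subfield_pow k \<Longrightarrow> (x - y :: 'a) \<in> subfield_pow k"
  by (simp add: subfield_pow_def power_3_power_diff)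

lemma subfield_pow_uminus: "x \<in> subfield_pow k \<Longrightarrow> (- x :: 'a) \<in> subfield_pow k"
  using subfield_pow_diff[OF subfield_pow_zero] by fastforce

lemma tr_add: "tr k (x + y :: 'a) = tr k x + tr k y"
  by (simp add: tr_def power_3_power_add sum.distrib)

lemma tr_uminus: "tr k (- x :: 'a) = - tr k x"
  by (simp add: tr_def sum_negf)

lemma tr_sum: "tr k (sum f A :: 'a) = (\<Sum>i\<in>A. tr k (f i))"
  by (simp add: tr_def power_3_power_sum sum.swap[of _ "{..<k}"])

lemma prime_field_eq_range: "prime_field = range (of_nat :: nat \<Rightarrow> 'a)"
proof -
  have "(of_nat k :: 'a) = of_nat (k mod 3)" for k
    by (simp add: of_nat_eq_iff_mod_3)
  then show ?thesis
    unfolding prime_field_def by fastforce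
qed

lemma zero_in_prime_field: "(0::'a) \<in> prime_field"
  unfolding prime_field_eq_range by (metis of_nat_0 rangeI)

lemma prime_field_uminus: "t \<in> prime_field \<Longrightarrow> (- t :: 'a) \<in> prime_field"
  using minus_of_nat unfolding prime_field_eq_range by (metis rangeE rangeI)

lemma power3_eq_self_imp_prime_field:
  assumes "(t::'a) ^ 3 = t"
  shows "t \<in> prime_field"
proof -
  have "t * (t - 1) * (t + 1) = 0"
    using assms by (simp add: algebra_simps power3_eq_cube)
  then have "t = 0 \<or> t = 1 \<or> t = -1"
    by (auto simp: eq_neg_iff_add_eq_0)
  moreover have "-1 = (of_nat 2 :: 'a)"
    using minus_of_nat[of 1] by simp
  ultimately show ?thesis
    unfolding prime_field_eq_range by (metis of_nat_0 of_nat_1 rangeI)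
qed

lemma tr_power3_eq_self:
  assumes "x \<in> subfield_pow k"
  shows "(tr k x :: 'a) ^ 3 = tr k x"
proof -
  have "(tr k x) ^ 3 ^ 1 = (\<Sum>j<k. x ^ 3 ^ Suc j)"
    unfolding tr_def power_3_power_sum by (simp add: power_mult[symmetric] mult.commute)
  also have "\<dots> = (\<Sum>j<Suc k. x ^ 3 ^ j) - x"
    by (simp only: sum.lessThan_Suc_shift) simp
  also have "\<dots> = tr k x"
    using assms by (simp add: tr_def subfield_pow_def)
  finally show ?thesis
    by simp
qed

lemma tr_in_prime_field: "x \<in> subfield_pow k \<Longrightarrow> (tr k x :: 'a) \<in> prime_field"
  by (intro power3_eq_self_imp_prime_field tr_power3_eq_self)

lemma chi_of_nat: "chi (of_nat k :: 'a) = omega ^ k"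
proof -
  have "chi (of_nat k :: 'a) = (\<Sum>j<3. if j = k mod 3 then omega ^ j else 0)"
    unfolding chi_def by (rule sum.cong) (auto simp: of_nat_eq_iff_mod_3)
  then show ?thesis
    by (simp add: omega_power_mod_3[of k])
qed

lemma chi_zero: "chi (0::'a) = 1"
  using chi_of_nat[of 0] by simp

lemma chi_add: "s \<in> prime_field \<Longrightarrow> t \<in> prime_field \<Longrightarrow> chi (s + t :: 'a) = chi s * chi t"
  unfolding prime_field_eq_range by (auto simp flip: of_nat_add simp: chi_of_nat power_add)

lemma chi_diff: "s \<in> prime_field \<Longrightarrow> t \<in> prime_field \<Longrightarrow> chi (s - t :: 'a) = chi s * chi (- t)"
  using chi_add[of s "- t"] prime_field_uminus by simp

lemma chi_in_cube_roots:
  assumes "(t::'a) \<in> prime_field"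
  shows "chi t \<in> {1, omega, omega ^ 2}"
proof -
  obtain k where "k < 3" "chi t = omega ^ k"
    using assms chi_of_nat unfolding prime_field_def by blast
  moreover have "k = 0 \<or> k = 1 \<or> k = 2"
    using \<open>k < 3\<close> by auto
  ultimately show ?thesis
    by auto
qed

lemma chi_neq_1:
  assumes "(t::'a) \<in> prime_field" "t \<noteq> 0"
  shows "chi t \<noteq> 1"
proof -
  obtain k where "k < 3" "k \<noteq> 0" "chi t = omega ^ k"
    using assms chi_of_nat unfolding prime_field_def by fastforce
  moreover have "k = 1 \<or> k = 2"
    using \<open>k < 3\<close> \<open>k \<noteq> 0\<close> by auto
  ultimately show ?thesis
    using omega_neq by auto
qed

end


section \<open>Finite fields\<close>

definition nonzero_mult_group :: "'a::field monoid" where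
  "nonzero_mult_group = \<lparr>carrier = - {0}, monoid.mult = (*), one = 1\<rparr>"

lemma comm_group_nonzero_mult_group: "comm_group (nonzero_mult_group :: 'a::field monoid)"
  by (rule comm_groupI)
     (auto simp: nonzero_mult_group_def mult_ac intro!: bexI[of _ "inverse x" for x])

lemma nonzero_mult_group_pow: "x [^]\<^bsub>nonzero_mult_group\<^esub> n = (x::'a::field) ^ n"
  by (induction n) (simp_all add: nat_pow_def nonzero_mult_group_def mult.commute)

lemma finite_field_power_card_minus_1:
  fixes x :: "'a::{field,finite}"
  assumes "x \<noteq> 0"
  shows "x ^ (card (UNIV :: 'a set) - 1) = 1"
proof -
  have "card (carrier (nonzero_mult_group :: 'a monoid)) = card (UNIV :: 'a set) - 1"
    by (simp add: nonzero_mult_group_def Compl_eq_Diff_UNIV card_Diff_singleton)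
  then show ?thesis
    using comm_group.power_order_eq_one[OF comm_group_nonzero_mult_group, of x] assms
    by (simp add: nonzero_mult_group_pow) (simp add: nonzero_mult_group_def)
qed

lemma card_roots_power_le:
  assumes "k > 0"
  shows "card {x::'a::idom. x ^ k = c} \<le> k"
proof -
  define p where "p = monom (1::'a) k + [:-c:]"
  have "degree p = k"
    unfolding p_def using assms by (subst degree_add_eq_left) (auto simp: degree_monom_eq)
  moreover have "{x. poly p x = 0} = {x. x ^ k = c}"
    by (auto simp: p_def poly_monom)
  ultimately show ?thesis
    using card_poly_roots_bound[of p] assms by fastforce
qed

lemma card_quadratic_roots_le_2: "card {w::'a::idom. w * w - c * w + b = 0} \<le> 2"
proof -
  have "{x. poly [:b, -c, 1:] x = 0} = {w::'a. w * w - c * w + b = 0}"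
    by (auto simp: algebra_simps)
  then show ?thesis
    using card_poly_roots_bound[of "[:b, -c, 1::'a:]"] by simp
qed

lemma sum_comp_eq_sum_card_fibres:
  fixes F :: "'b \<Rightarrow> 'c::comm_semiring_1"
  assumes "finite S" "finite T" "\<phi> ` S \<subseteq> T"
  shows "(\<Sum>x\<in>S. F (\<phi> x)) = (\<Sum>c\<in>T. of_nat (card {x \<in> S. \<phi> x = c}) * F c)"
proof -
  have "(\<Sum>x\<in>S. F (\<phi> x)) = (\<Sum>c\<in>T. \<Sum>x\<in>{x \<in> S. \<phi> x = c}. F (\<phi> x))"
    using assms by (rule sum.group[symmetric])
  also have "\<dots> = (\<Sum>c\<in>T. of_nat (card {x \<in> S. \<phi> x = c}) * F c)"
    by (intro sum.cong) auto
  finally show ?thesis .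
qed


section \<open>The field with \<open>3\<^sup>2\<^sup>m\<close> elements\<close>

locale gf_3_2m =
  fixes field_type :: "'a::{field,finite} itself" and m :: nat
  assumes m_pos: "m > 0" and card_UNIV: "card (UNIV :: 'a set) = 3 ^ (2 * m)"
begin

lemma CHAR_eq_3: "CHAR('a) = 3"
proof -
  have "prime CHAR('a)"
    by (rule prime_CHAR_semidom) (simp add: finite_imp_CHAR_pos)
  moreover have "CHAR('a) dvd 3 ^ (2 * m)"
    using CHAR_dvd_CARD[where 'a='a] card_UNIV by simp
  ultimately show ?thesis
    using prime_dvd_power primes_dvd_imp_eq[of "CHAR('a)" 3] by auto
qed

end

sublocale gf_3_2m \<subseteq> field_char_3 field_type
  by unfold_locales (rule CHAR_eq_3)

context gf_3_2m
begin

abbreviation Fq :: "'a set" where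
  "Fq \<equiv> subfield_pow m"

definition unit_circle :: "'a set" where
  "unit_circle = {u. u ^ (3 ^ m + 1) = 1}"

definition circle_fibre :: "'a \<Rightarrow> 'a set" where
  "circle_fibre u = {x. x \<noteq> 0 \<and> x ^ (3 ^ m - 1) = u}"

lemma three_power_ge_3: "(3::nat) ^ m \<ge> 3"
  using m_pos by (metis One_nat_def Suc_leI power_increasing power_one_right zero_less_numeral)

lemma three_power_square_eq: "(3::nat) ^ m * 3 ^ m = (3 ^ m - 1) * (3 ^ m + 1) + 1"
  using three_power_ge_3 by (cases "(3::nat) ^ m") auto

lemma card_minus_1_eq: "(3::nat) ^ (2 * m) - 1 = (3 ^ m - 1) * (3 ^ m + 1)"
  using three_power_square_eq by (simp add: mult_2 power_add)

lemma power_minus_1_in_unit_circle: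
  assumes "(x::'a) \<noteq> 0"
  shows "x ^ (3 ^ m - 1) \<in> unit_circle"
proof -
  have "(x ^ (3 ^ m - 1)) ^ (3 ^ m + 1) = x ^ (card (UNIV :: 'a set) - 1)"
    by (simp only: power_mult[symmetric] card_UNIV card_minus_1_eq)
  then show ?thesis
    using finite_field_power_card_minus_1[OF assms] by (simp add: unit_circle_def)
qed

lemma frobenius_involution: "((x::'a) ^ 3 ^ m) ^ 3 ^ m = x"
proof (cases "x = 0")
  case False
  have "x ^ (3 ^ m * 3 ^ m) = (x ^ (3 ^ m - 1)) ^ (3 ^ m + 1) * x"
    by (simp only: three_power_square_eq power_add power_mult power_one_right)
  also have "\<dots> = x"
    using power_minus_1_in_unit_circle[OF False] by (simp add: unit_circle_def)
  finally show ?thesis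
    by (simp add: power_mult)
qed simp

lemma tr_double: "tr (2 * m) (w::'a) = tr m (w + w ^ 3 ^ m)"
proof -
  have "tr (2 * m) w = (\<Sum>j<m. w ^ 3 ^ j) + (\<Sum>j<m. w ^ 3 ^ (m + j))"
    unfolding tr_def mult_2 by (rule sum_lessThan_add)
  also have "\<dots> = tr m (w + w ^ 3 ^ m)"
    by (simp add: tr_def power_3_power_add sum.distrib power_add power_mult)
  finally show ?thesis .
qed

lemma add_frobenius_in_Fq: "(w::'a) + w ^ 3 ^ m \<in> Fq"
  by (simp add: subfield_pow_def power_3_power_add frobenius_involution)

lemma tr_in_prime_field_2m: "tr (2 * m) (w::'a) \<in> prime_field"
  unfolding tr_double by (rule tr_in_prime_field[OF add_frobenius_in_Fq])

lemma in_Fq_iff_power_minus_1: "(x::'a) \<noteq> 0 \<Longrightarrow> x \<in> Fq \<longleftrightarrow> x ^ (3 ^ m - 1) = 1"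
  using power_minus_mult[of "3 ^ m" x] by (auto simp: subfield_pow_def)

lemma unit_circle_nonzero: "u \<in> unit_circle \<Longrightarrow> u \<noteq> 0"
  by (auto simp: unit_circle_def)

lemma one_in_unit_circle: "1 \<in> unit_circle"
  by (simp add: unit_circle_def)

lemma card_nonzero_eq_sum_circle_fibres:
  "card (- {0::'a}) = (\<Sum>u\<in>unit_circle. card (circle_fibre u))"
proof -
  have "(\<Sum>u\<in>unit_circle. \<Sum>x\<in>{x \<in> - {0::'a}. x ^ (3 ^ m - 1) = u}. 1::nat) = (\<Sum>x\<in>- {0::'a}. 1)"
    by (rule sum.group) (use power_minus_1_in_unit_circle in auto)
  moreover have "{x \<in> - {0::'a}. x ^ (3 ^ m - 1) = u} = circle_fibre u" for u
    by (auto simp: circle_fibre_def)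
  ultimately show ?thesis
    by simp
qed

text \<open>Both bounds come from counting roots; since there are \<open>q\<^sup>2 - 1 = (q + 1)(q - 1)\<close>
  nonzero elements, both are attained.\<close>

lemma card_unit_circle_and_fibres:
  "card unit_circle = 3 ^ m + 1 \<and> (\<forall>u\<in>unit_circle. card (circle_fibre u) = 3 ^ m - 1)"
proof -
  have fibre_le: "card (circle_fibre u) \<le> 3 ^ m - 1" for u
  proof -
    have "card (circle_fibre u) \<le> card {x::'a. x ^ (3 ^ m - 1) = u}"
      by (rule card_mono) (auto simp: circle_fibre_def)
    also have "\<dots> \<le> 3 ^ m - 1"
      using three_power_ge_3 by (intro card_roots_power_le) simp
    finally show ?thesis .
  qed
  have circle_le: "card unit_circle \<le> 3 ^ m + 1"
    unfolding unit_circle_def by (rule card_roots_power_le) simp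
  have total: "(\<Sum>u\<in>unit_circle. card (circle_fibre u)) = (3 ^ m + 1) * (3 ^ m - 1)"
    using card_nonzero_eq_sum_circle_fibres card_UNIV card_minus_1_eq
    by (simp add: Compl_eq_Diff_UNIV card_Diff_singleton mult.commute)
  have "(3 ^ m + 1) * (3 ^ m - 1) \<le> card unit_circle * (3 ^ m - 1)"
    using total sum_bounded_above[of unit_circle "\<lambda>u. card (circle_fibre u)", OF fibre_le]
    by simp
  then have "3 ^ m + 1 \<le> card unit_circle"
    unfolding mult_le_cancel2 using three_power_ge_3 by simp
  with circle_le have "card unit_circle = 3 ^ m + 1"
    by simp
  moreover have "card (circle_fibre u) = 3 ^ m - 1" if "u \<in> unit_circle" for u
  proof (rule ccontr)
    assume "card (circle_fibre u) \<noteq> 3 ^ m - 1"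
    with fibre_le[of u] have "card (circle_fibre u) < 3 ^ m - 1"
      by simp
    then have "(\<Sum>u\<in>unit_circle. card (circle_fibre u)) < (\<Sum>u\<in>unit_circle. 3 ^ m - 1)"
      using that fibre_le by (intro sum_strict_mono_ex1) auto
    with total \<open>card unit_circle = 3 ^ m + 1\<close> show False
      by simp
  qed
  ultimately show ?thesis
    by blast
qed

lemma card_unit_circle: "card unit_circle = 3 ^ m + 1"
  using card_unit_circle_and_fibres by blast

lemma card_circle_fibre: "u \<in> unit_circle \<Longrightarrow> card (circle_fibre u) = 3 ^ m - 1"
  using card_unit_circle_and_fibres by blast

lemma card_Fq: "card Fq = 3 ^ m"
proof -
  have "circle_fibre 1 = Fq - {0}"
    using in_Fq_iff_power_minus_1 by (auto simp: circle_fibre_def)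
  moreover have "card (Fq - {0}) = card Fq - 1"
    by (rule card_Diff_singleton) (simp_all add: subfield_pow_zero)
  ultimately have "card Fq - 1 = 3 ^ m - 1"
    using card_circle_fibre[OF one_in_unit_circle] by simp
  moreover have "card Fq > 0"
    using subfield_pow_zero by (auto simp: card_gt_0_iff)
  ultimately show ?thesis
    using three_power_ge_3 by linarith
qed

lemma circle_fibre_eq_coset:
  assumes "v \<in> circle_fibre u"
  shows "circle_fibre u = (\<lambda>y. v * y) ` (Fq - {0})"
proof -
  have v: "v \<noteq> 0" "v ^ (3 ^ m - 1) = u"
    using assms by (auto simp: circle_fibre_def)
  have "x \<in> (\<lambda>y. v * y) ` (Fq - {0})" if "x \<in> circle_fibre u" for x
  proof -
    have "x \<noteq> 0" "(x / v) ^ (3 ^ m - 1) = 1"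
      using that v by (auto simp: circle_fibre_def power_divide)
    then have "x / v \<in> Fq - {0}"
      using in_Fq_iff_power_minus_1 v by auto
    then show ?thesis
      using v by (auto intro!: image_eqI[of x _ "x / v"])
  qed
  moreover have "v * y \<in> circle_fibre u" if "y \<in> Fq - {0}" for y
    using that v in_Fq_iff_power_minus_1[of y] by (auto simp: circle_fibre_def power_mult_distrib)
  ultimately show ?thesis
    by blast
qed

lemma circle_fibre_nonempty: "u \<in> unit_circle \<Longrightarrow> circle_fibre u \<noteq> {}"
  using card_circle_fibre[of u] three_power_ge_3 by auto


section \<open>Characters and the Walsh transform\<close>

lemma exists_tr_neq_0: "\<exists>y\<in>Fq. tr m y \<noteq> 0"
proof (rule ccontr)
  assume "\<not> (\<exists>y\<in>Fq. tr m y \<noteq> 0)"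
  define p :: "'a poly" where "p = (\<Sum>j<m. monom 1 (3 ^ j))"
  have poly_p: "poly p x = tr m x" for x
    by (simp add: p_def tr_def poly_sum poly_monom)
  have "degree p \<le> 3 ^ (m - 1)"
    unfolding p_def
  proof (rule degree_sum_le)
    fix j assume "j \<in> {..<m}"
    then show "degree (monom (1::'a) (3 ^ j)) \<le> 3 ^ (m - 1)"
      by (simp add: degree_monom_eq power_increasing)
  qed simp
  moreover have "coeff p (3 ^ (m - 1)) = 1"
    using m_pos by (simp add: p_def coeff_sum coeff_monom)
  then have "p \<noteq> 0"
    by auto
  then have "card {x. poly p x = 0} \<le> degree p"
    by (rule card_poly_roots_bound)
  moreover have "card Fq \<le> card {x. poly p x = 0}"
    using \<open>\<not> (\<exists>y\<in>Fq. tr m y \<noteq> 0)\<close> poly_p by (intro card_mono) auto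
  moreover have "(3::nat) ^ (m - 1) < 3 ^ m"
    using m_pos by (intro power_strict_increasing) auto
  ultimately show False
    using card_Fq by linarith
qed

lemma sum_chi_tr_eq_0: "(\<Sum>y\<in>Fq. chi (tr m y)) = 0"
proof -
  obtain y\<^sub>0 where y\<^sub>0: "y\<^sub>0 \<in> Fq" "tr m y\<^sub>0 \<noteq> 0"
    using exists_tr_neq_0 by blast
  have "(\<Sum>y\<in>Fq. chi (tr m y)) = (\<Sum>y\<in>Fq. chi (tr m (y + y\<^sub>0)))"
    by (rule sum.reindex_bij_witness[where j="\<lambda>y. y - y\<^sub>0" and i="\<lambda>y. y + y\<^sub>0"])
       (auto simp: y\<^sub>0 subfield_pow_add subfield_pow_diff)
  also have "\<dots> = (\<Sum>y\<in>Fq. chi (tr m y)) * chi (tr m y\<^sub>0)"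
    by (auto simp: sum_distrib_right tr_add chi_add tr_in_prime_field y\<^sub>0 intro!: sum.cong)
  finally have "(\<Sum>y\<in>Fq. chi (tr m y)) * (1 - chi (tr m y\<^sub>0)) = 0"
    by (simp add: algebra_simps)
  moreover have "chi (tr m y\<^sub>0) \<noteq> 1"
    using chi_neq_1 tr_in_prime_field y\<^sub>0 by blast
  ultimately show ?thesis
    by simp
qed

lemma sum_chi_tr_mult:
  assumes "d \<in> Fq"
  shows "(\<Sum>y\<in>Fq. chi (tr m (d * y))) = (if d = 0 then of_nat (3 ^ m) else 0)"
proof (cases "d = 0")
  case False
  have "(\<Sum>y\<in>Fq. chi (tr m (d * y))) = (\<Sum>y\<in>Fq. chi (tr m y))"
    by (rule sum.reindex_bij_witness[where i="\<lambda>y. y / d" and j="\<lambda>y. d * y"])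
       (use False assms in \<open>auto simp: subfield_pow_mult subfield_pow_divide\<close>)
  with False show ?thesis
    by (simp add: sum_chi_tr_eq_0)
qed (simp add: tr_zero chi_zero card_Fq)

lemma tr_double_mult: "y \<in> Fq \<Longrightarrow> tr (2 * m) (w * y) = tr m ((w + w ^ 3 ^ m) * y)"
  unfolding tr_double by (simp add: subfield_pow_def power_mult_distrib algebra_simps)

text \<open>On the fibre \<open>v F\<^sub>q\<^sup>*\<close> the character \<open>x \<mapsto> \<omega>^Tr(\<lambda>x)\<close> is trivial exactly when
  \<open>\<lambda>v + (\<lambda>v)\<^sup>q = 0\<close>, i.e.\ when \<open>\<lambda> = 0\<close> or \<open>\<lambda>\<^sup>q\<^sup>-\<^sup>1 u = -1\<close>.\<close>

lemma sum_circle_fibre_chi_tr: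
  assumes "u \<in> unit_circle"
  shows "(\<Sum>x\<in>circle_fibre u. chi (- tr (2 * m) (l * x))) =
           (if l = 0 \<or> l ^ (3 ^ m - 1) * u = -1 then of_nat (3 ^ m) else 0) - 1"
proof -
  obtain v where v: "v \<in> circle_fibre u"
    using circle_fibre_nonempty[OF assms] by blast
  then have "v \<noteq> 0" "v ^ (3 ^ m - 1) = u"
    by (auto simp: circle_fibre_def)
  define c where "c = l * v + (l * v) ^ 3 ^ m"
  have "- c \<in> Fq"
    unfolding c_def by (intro subfield_pow_uminus add_frobenius_in_Fq)
  have "(\<Sum>x\<in>circle_fibre u. chi (- tr (2 * m) (l * x))) =
        (\<Sum>y\<in>Fq - {0}. chi (- tr (2 * m) ((l * v) * y)))"
    unfolding circle_fibre_eq_coset[OF v] using \<open>v \<noteq> 0\<close>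
    by (subst sum.reindex) (auto simp: inj_on_def mult.assoc)
  also have "\<dots> = (\<Sum>y\<in>Fq - {0}. chi (tr m ((- c) * y)))"
  proof (rule sum.cong)
    fix y assume "y \<in> Fq - {0}"
    then have "tr (2 * m) ((l * v) * y) = tr m (c * y)"
      by (simp add: tr_double_mult c_def)
    then show "chi (- tr (2 * m) ((l * v) * y)) = chi (tr m ((- c) * y))"
      by (simp add: tr_uminus)
  qed simp
  also have "\<dots> = (\<Sum>y\<in>Fq. chi (tr m ((- c) * y))) - 1"
    by (simp add: sum_diff1 subfield_pow_zero tr_zero chi_zero)
  also have "\<dots> = (if c = 0 then of_nat (3 ^ m) else 0) - 1"
    using sum_chi_tr_mult[OF \<open>- c \<in> Fq\<close>] by simp
  also have "c = 0 \<longleftrightarrow> l = 0 \<or> l ^ (3 ^ m - 1) * u = -1"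
  proof (cases "l = 0")
    case False
    then have "l * v \<noteq> 0"
      using \<open>v \<noteq> 0\<close> by simp
    have "c = 0 \<longleftrightarrow> (l * v) ^ (3 ^ m - 1) * (l * v) = (-1) * (l * v)"
      using power_minus_mult[of "3 ^ m" "l * v"] by (simp add: c_def eq_neg_iff_add_eq_0 add.commute)
    also have "\<dots> \<longleftrightarrow> (l * v) ^ (3 ^ m - 1) = -1"
      using \<open>l * v \<noteq> 0\<close> by (simp only: mult_cancel_right) simp
    also have "\<dots> \<longleftrightarrow> l ^ (3 ^ m - 1) * u = -1"
      using \<open>v ^ (3 ^ m - 1) = u\<close> by (simp add: power_mult_distrib)
    finally show ?thesis
      using False by simp
  qed (simp add: c_def)
  finally show ?thesis .
qed

lemma sqrt_three_power_double: "complex_of_real (sqrt (3 ^ (2 * m))) = of_nat (3 ^ m)"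
  by (simp only: mult.commute[of 2 m] power_mult) simp

definition circle_char_sum :: "('a \<Rightarrow> 'a) \<Rightarrow> complex" where
  "circle_char_sum g = (\<Sum>u\<in>unit_circle. chi (g u))"

context
  fixes f g :: "'a \<Rightarrow> 'a"
  assumes f_eq: "\<And>x. x \<noteq> 0 \<Longrightarrow> f x = g (x ^ (3 ^ m - 1))"
    and f_zero: "f 0 = 0"
    and g_in_prime_field: "\<And>u. g u \<in> prime_field"
begin

lemma walsh_eq_unit_circle_sum:
  "walsh (2 * m) f l = 1 + (\<Sum>u\<in>unit_circle. chi (g u) *
     ((if l = 0 \<or> l ^ (3 ^ m - 1) * u = -1 then of_nat (3 ^ m) else 0) - 1))"
proof -
  have "walsh (2 * m) f l = 1 + (\<Sum>x\<in>- {0}. chi (f x - tr (2 * m) (l * x)))"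
    unfolding walsh_def
    by (subst sum.remove[of _ 0]) (simp_all add: f_zero tr_zero chi_zero Compl_eq_Diff_UNIV)
  also have "(\<Sum>x\<in>- {0}. chi (f x - tr (2 * m) (l * x))) =
      (\<Sum>u\<in>unit_circle. \<Sum>x\<in>{x \<in> - {0}. x ^ (3 ^ m - 1) = u}. chi (f x - tr (2 * m) (l * x)))"
    by (rule sum.group[symmetric]) (use power_minus_1_in_unit_circle in auto)
  also have "\<dots> = (\<Sum>u\<in>unit_circle. \<Sum>x\<in>circle_fibre u. chi (g u) * chi (- tr (2 * m) (l * x)))"
    by (intro sum.cong)
       (auto simp: circle_fibre_def f_eq chi_diff g_in_prime_field tr_in_prime_field_2m)
  also have "\<dots> = (\<Sum>u\<in>unit_circle. chi (g u) *
      ((if l = 0 \<or> l ^ (3 ^ m - 1) * u = -1 then of_nat (3 ^ m) else 0) - 1))"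
    by (intro sum.cong) (simp_all add: sum_circle_fibre_chi_tr flip: sum_distrib_left)
  finally show ?thesis .
qed

lemma walsh_at_zero: "walsh (2 * m) f 0 = 1 + (of_nat (3 ^ m) - 1) * circle_char_sum g"
  unfolding walsh_eq_unit_circle_sum circle_char_sum_def by (simp add: sum_distrib_left mult.commute)

lemma walsh_at_nonzero:
  assumes "l \<noteq> 0"
  shows "walsh (2 * m) f l =
    1 - circle_char_sum g + of_nat (3 ^ m) * chi (g (- inverse (l ^ (3 ^ m - 1))))"
proof -
  define u\<^sub>0 where "u\<^sub>0 = - inverse (l ^ (3 ^ m - 1))"
  have l_circle: "(l ^ (3 ^ m - 1)) ^ (3 ^ m + 1) = 1"
    using power_minus_1_in_unit_circle[OF assms] by (simp add: unit_circle_def)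
  have "even ((3::nat) ^ m + 1)"
    by simp
  then have "u\<^sub>0 \<in> unit_circle"
    unfolding u\<^sub>0_def unit_circle_def mem_Collect_eq
    by (simp only: power_minus_even power_inverse l_circle inverse_1)
  have u\<^sub>0_iff: "l ^ (3 ^ m - 1) * u = -1 \<longleftrightarrow> u = u\<^sub>0" for u
    using assms by (auto simp: u\<^sub>0_def field_simps)
  have "walsh (2 * m) f l = 1 + (\<Sum>u\<in>unit_circle.
      (if u = u\<^sub>0 then of_nat (3 ^ m) * chi (g u) else 0) - chi (g u))"
    unfolding walsh_eq_unit_circle_sum using assms u\<^sub>0_iff
    by (intro arg_cong[where f="\<lambda>x. 1 + x"] sum.cong) (auto simp: algebra_simps)
  also have "\<dots> = 1 + of_nat (3 ^ m) * chi (g u\<^sub>0) - circle_char_sum g"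
    using \<open>u\<^sub>0 \<in> unit_circle\<close> by (simp add: sum_subtractf circle_char_sum_def)
  finally show ?thesis
    by (simp add: u\<^sub>0_def)
qed

lemma regular_bent_iff_circle_char_sum_eq_1:
  "regular_bent (2 * m) f \<longleftrightarrow> circle_char_sum g = 1"
proof
  assume "regular_bent (2 * m) f"
  then obtain f' :: "'a \<Rightarrow> 'a" where f': "\<And>l. f' l \<in> prime_field"
    "\<And>l. walsh (2 * m) f l = of_nat (3 ^ m) * chi (f' l)"
    unfolding regular_bent_def sqrt_three_power_double by blast
  show "circle_char_sum g = 1"
  proof (rule cube_roots_relation_imp_eq_1)
    show "1 + (of_real (3 ^ m) - 1) * circle_char_sum g = of_real (3 ^ m) * chi (f' 0)"
      using walsh_at_zero f'(2)[of 0] by simp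
    show "1 - circle_char_sum g + of_real (3 ^ m) * chi (g (-1)) = of_real (3 ^ m) * chi (f' 1)"
      using walsh_at_nonzero[of 1] f'(2)[of 1] by simp
    show "(3::real) ^ m \<ge> 3"
      using three_power_ge_3 by (metis of_nat_le_iff of_nat_numeral of_nat_power)
  qed (use f'(1) g_in_prime_field chi_in_cube_roots in auto)
next
  assume "circle_char_sum g = 1"
  define f' where "f' l = (if l = 0 then 0 else g (- inverse (l ^ (3 ^ m - 1))))" for l
  have "walsh (2 * m) f l = of_nat (3 ^ m) * chi (f' l)" for l
    using walsh_at_zero walsh_at_nonzero \<open>circle_char_sum g = 1\<close>
    by (simp add: f'_def chi_zero)
  moreover have "f' l \<in> prime_field" for l
    by (simp add: f'_def g_in_prime_field zero_in_prime_field)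
  ultimately show "regular_bent (2 * m) f"
    unfolding regular_bent_def sqrt_three_power_double by blast
qed

end


section \<open>Kloosterman sums\<close>

lemma norm_in_Fq: "(a::'a) ^ (3 ^ m + 1) \<in> Fq"
  by (simp add: subfield_pow_def power_mult_distrib frobenius_involution mult.commute)

lemma kloosterman_eq_sum_nonzero:
  assumes "b \<in> Fq" "b \<noteq> 0"
  shows "kloosterman m b = 1 + (\<Sum>y\<in>Fq - {0}. chi (tr m (y + b / y)))"
proof -
  have power_eq_inverse: "x ^ (3 ^ m - 2) = inverse x" if "x \<in> Fq - {0}" for x
  proof -
    obtain r where "(3::nat) ^ m = 2 + r"
      using le_Suc_ex[of 2 "3 ^ m"] three_power_ge_3 by auto
    then have "x ^ (3 ^ m - 2) * x = x ^ (3 ^ m - 1)"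
      by (simp add: numeral_2_eq_2)
    also have "\<dots> = 1"
      using that in_Fq_iff_power_minus_1 by blast
    finally show ?thesis
      using that by (simp add: field_simps)
  qed
  have "kloosterman m b = 1 + (\<Sum>x\<in>Fq - {0}. chi (tr m (b * x + x ^ (3 ^ m - 2))))"
    unfolding kloosterman_def using three_power_ge_3
    by (subst sum.remove[of _ 0]) (simp_all add: subfield_pow_zero tr_zero chi_zero power_0_left)
  also have "(\<Sum>x\<in>Fq - {0}. chi (tr m (b * x + x ^ (3 ^ m - 2)))) =
      (\<Sum>x\<in>Fq - {0}. chi (tr m (b * x + b / (b * x))))"
    using \<open>b \<noteq> 0\<close> by (intro sum.cong) (simp_all add: power_eq_inverse field_simps)
  also have "\<dots> = (\<Sum>y\<in>Fq - {0}. chi (tr m (y + b / y)))"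
    by (rule sum.reindex_bij_witness[where i="\<lambda>y. y / b" and j="\<lambda>x. b * x"])
       (use assms in \<open>auto simp: subfield_pow_mult subfield_pow_divide\<close>)
  finally show ?thesis .
qed

lemma norm_fibre_eq_image:
  assumes "(a::'a) \<noteq> 0"
  shows "{w. w ^ (3 ^ m + 1) = a ^ (3 ^ m + 1)} = (\<lambda>u. a * u) ` unit_circle"
proof -
  have "w \<in> (\<lambda>u. a * u) ` unit_circle" if "w ^ (3 ^ m + 1) = a ^ (3 ^ m + 1)" for w
    using that assms
    by (intro image_eqI[of w _ "w / a"]) (simp_all add: unit_circle_def power_divide)
  then show ?thesis
    by (auto simp: unit_circle_def power_mult_distrib)
qed

text \<open>Both sets consist of roots of \<open>w\<^sup>2 - c w + b\<close>; a common element \<open>w\<^sub>0\<close> lies in \<open>F\<^sub>q\<close>, so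
  \<open>b = w\<^sub>0\<^sup>2\<close> and \<open>c = 2 w\<^sub>0\<close> make it a double root.\<close>

lemma card_trace_fibres_le_2:
  "card {w. w ^ (3 ^ m + 1) = b \<and> w + w ^ 3 ^ m = c} + card {y \<in> Fq - {0}. y + b / y = c} \<le> 2"
  (is "card ?B + card ?A \<le> 2")
proof -
  define R where "R = {w::'a. w * w - c * w + b = 0}"
  have "card R \<le> 2"
    unfolding R_def by (rule card_quadratic_roots_le_2)
  have "?B \<subseteq> R"
    by (auto simp: R_def algebra_simps)
  have "?A \<subseteq> R"
    by (auto simp: R_def field_simps)
  show ?thesis
  proof (cases "?B \<inter> ?A = {}")
    case True
    then have "card ?B + card ?A = card (?B \<union> ?A)"
      by (simp add: card_Un_disjoint)
    also have "\<dots> \<le> card R"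
      using \<open>?B \<subseteq> R\<close> \<open>?A \<subseteq> R\<close> by (intro card_mono) auto
    finally show ?thesis
      using \<open>card R \<le> 2\<close> by simp
  next
    case False
    then obtain w\<^sub>0 where "w\<^sub>0 \<in> ?B" "w\<^sub>0 \<in> ?A"
      by blast
    then have "w\<^sub>0 * w\<^sub>0 = b" "c = w\<^sub>0 + w\<^sub>0"
      by (auto simp: subfield_pow_def)
    then have "w * w - c * w + b = (w - w\<^sub>0) * (w - w\<^sub>0)" for w
      by (simp add: algebra_simps)
    then have "R \<subseteq> {w\<^sub>0}"
      by (auto simp: R_def)
    then have "card ?B \<le> card {w\<^sub>0}" "card ?A \<le> card {w\<^sub>0}"
      using \<open>?B \<subseteq> R\<close> \<open>?A \<subseteq> R\<close> by (intro card_mono; auto)+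
    then show ?thesis
      by simp
  qed
qed

lemma card_trace_fibres_eq_2:
  assumes "(a::'a) \<noteq> 0" "c \<in> Fq"
  shows "card {w. w ^ (3 ^ m + 1) = a ^ (3 ^ m + 1) \<and> w + w ^ 3 ^ m = c} +
    card {y \<in> Fq - {0}. y + a ^ (3 ^ m + 1) / y = c} = 2"
proof -
  define b where "b = a ^ (3 ^ m + 1)"
  have "b \<in> Fq"
    unfolding b_def by (rule norm_in_Fq)
  define h where "h c = card {w. w ^ (3 ^ m + 1) = b \<and> w + w ^ 3 ^ m = c} +
    card {y \<in> Fq - {0}. y + b / y = c}" for c
  have "(\<Sum>c\<in>Fq. card {w. w ^ (3 ^ m + 1) = b \<and> w + w ^ 3 ^ m = c}) =
      card {w. w ^ (3 ^ m + 1) = b}"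
    using sum_comp_eq_sum_card_fibres
        [of "{w. w ^ (3 ^ m + 1) = b}" Fq "\<lambda>w. w + w ^ 3 ^ m" "\<lambda>_. 1::nat"]
    by (simp add: add_frobenius_in_Fq image_subset_iff)
  also have "\<dots> = 3 ^ m + 1"
    unfolding b_def norm_fibre_eq_image[OF assms(1)] using assms(1)
    by (subst card_image) (simp_all add: inj_on_def card_unit_circle)
  finally have B: "(\<Sum>c\<in>Fq. card {w. w ^ (3 ^ m + 1) = b \<and> w + w ^ 3 ^ m = c}) = 3 ^ m + 1" .
  have "(\<Sum>c\<in>Fq. card {y \<in> Fq - {0}. y + b / y = c}) = card (Fq - {0})"
    using sum_comp_eq_sum_card_fibres[of "Fq - {0}" Fq "\<lambda>y. y + b / y" "\<lambda>_. 1::nat"]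
    by (simp add: \<open>b \<in> Fq\<close> image_subset_iff subfield_pow_add subfield_pow_divide)
  also have "\<dots> = 3 ^ m - 1"
    by (simp add: card_Fq subfield_pow_zero card_Diff_singleton)
  finally have A: "(\<Sum>c\<in>Fq. card {y \<in> Fq - {0}. y + b / y = c}) = 3 ^ m - 1" .
  have h_le: "h c \<le> 2" for c
    unfolding h_def by (rule card_trace_fibres_le_2)
  have "(\<Sum>c\<in>Fq. h c) = (\<Sum>c\<in>Fq. 2)"
    using A B three_power_ge_3 by (simp add: h_def sum.distrib card_Fq)
  then have "h c = 2"
    using assms(2) h_le sum_strict_mono_ex1[of Fq h "\<lambda>_. 2"] by (fastforce simp: le_less)
  then show ?thesis
    by (simp add: h_def b_def)
qed

lemma sum_unit_circle_chi_tr_eq_kloosterman: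
  assumes "(a::'a) \<noteq> 0"
  shows "(\<Sum>u\<in>unit_circle. chi (tr (2 * m) (a * u))) = 1 - kloosterman m (a ^ (3 ^ m + 1))"
proof -
  define b where "b = a ^ (3 ^ m + 1)"
  have "b \<in> Fq"
    unfolding b_def by (rule norm_in_Fq)
  define B where "B = {w. w ^ (3 ^ m + 1) = b}"
  define N where "N c = card {w \<in> B. w + w ^ 3 ^ m = c}" for c
  define M where "M c = card {y \<in> Fq - {0}. y + b / y = c}" for c
  have "(\<Sum>u\<in>unit_circle. chi (tr (2 * m) (a * u))) = (\<Sum>w\<in>B. chi (tr m (w + w ^ 3 ^ m)))"
    unfolding B_def b_def norm_fibre_eq_image[OF assms] using assms
    by (subst sum.reindex) (simp_all add: inj_on_def tr_double)
  also have "\<dots> = (\<Sum>c\<in>Fq. of_nat (N c) * chi (tr m c))"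
    unfolding N_def
    by (rule sum_comp_eq_sum_card_fibres[where F="\<lambda>c. chi (tr m c)"])
       (simp_all add: add_frobenius_in_Fq image_subset_iff)
  finally have sum_B:
    "(\<Sum>u\<in>unit_circle. chi (tr (2 * m) (a * u))) = (\<Sum>c\<in>Fq. of_nat (N c) * chi (tr m c))" .
  have "kloosterman m b = 1 + (\<Sum>y\<in>Fq - {0}. chi (tr m (y + b / y)))"
    using assms \<open>b \<in> Fq\<close> by (intro kloosterman_eq_sum_nonzero) (simp_all add: b_def)
  also have "(\<Sum>y\<in>Fq - {0}. chi (tr m (y + b / y))) = (\<Sum>c\<in>Fq. of_nat (M c) * chi (tr m c))"
    unfolding M_def
    by (rule sum_comp_eq_sum_card_fibres[where F="\<lambda>c. chi (tr m c)"])
       (simp_all add: \<open>b \<in> Fq\<close> image_subset_iff subfield_pow_add subfield_pow_divide)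
  finally have sum_A: "kloosterman m b = 1 + (\<Sum>c\<in>Fq. of_nat (M c) * chi (tr m c))" .
  have "N c + M c = 2" if "c \<in> Fq" for c
    using card_trace_fibres_eq_2[OF assms that] by (simp add: N_def M_def B_def b_def conj_commute)
  then have "(\<Sum>c\<in>Fq. of_nat (N c) * chi (tr m c)) + (\<Sum>c\<in>Fq. of_nat (M c) * chi (tr m c)) =
      2 * (\<Sum>c\<in>Fq. chi (tr m c))"
    by (simp add: sum_distrib_left flip: sum.distrib distrib_right of_nat_add)
  then show ?thesis
    using sum_A sum_B by (simp add: sum_chi_tr_eq_0 b_def eq_neg_iff_add_eq_0)
qed


lemma powi_unit_circle_add_mult:
  assumes "u \<in> unit_circle"
  shows "u powi (k + int (3 ^ m + 1) * j) = u powi k"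
proof -
  have "u powi (k + int (3 ^ m + 1) * j) = u powi k * u powi (int (3 ^ m + 1) * j)"
    using unit_circle_nonzero[OF assms] by (rule power_int_add[OF disjI1])
  also have "u powi (int (3 ^ m + 1) * j) = (u ^ (3 ^ m + 1)) powi j"
    by (rule power_int_power[symmetric])
  finally show ?thesis
    using assms by (simp add: unit_circle_def)
qed

lemma powi_in_unit_circle:
  assumes "u \<in> unit_circle"
  shows "u powi k \<in> unit_circle"
proof -
  have "(u powi k) ^ (3 ^ m + 1) = u powi (0 + int (3 ^ m + 1) * k)"
    by (simp only: power_int_power' mult.commute add_0)
  also have "\<dots> = u powi 0"
    by (rule powi_unit_circle_add_mult[OF assms])
  finally show ?thesis
    by (simp add: unit_circle_def)
qed

lemma sum_unit_circle_powi_coprime: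
  assumes "gcd s (3 ^ m + 1) = 1"
  shows "(\<Sum>u\<in>unit_circle. F (u powi s)) = (\<Sum>u\<in>unit_circle. F u)"
proof -
  obtain t k where "t * s + k * (3 ^ m + 1) = (1::int)"
    using bezout_int[of s "3 ^ m + 1"] assms by auto
  then have "s * t = 1 + int (3 ^ m + 1) * (- k)"
    by (simp add: algebra_simps)
  then have inverse_exponent: "u powi (s * t) = u" if "u \<in> unit_circle" for u
    using powi_unit_circle_add_mult[OF that, of 1 "- k"] by simp
  show ?thesis
    by (rule sum.reindex_bij_witness[where j="\<lambda>u. u powi s" and i="\<lambda>u. u powi t"])
       (auto simp: powi_in_unit_circle inverse_exponent mult.commute simp flip: power_int_mult)
qed

text \<open>On \<open>U\<close>, \<open>u\<^sup>2 + u\<^sup>4 + \<dots> + u\<^sup>q\<^sup>-\<^sup>1 = (u\<^sup>q\<^sup>+\<^sup>1 - u\<^sup>2)/(u\<^sup>2 - 1) = -1\<close>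
  unless \<open>u\<^sup>2 = 1\<close>, in which case the sum is \<open>(q - 1)/2 = 1\<close> in characteristic 3.\<close>

lemma sum_even_powers_unit_circle:
  assumes "u \<in> unit_circle"
  shows "(\<Sum>i = 1..(3 ^ m + 1) div 2 - 1. u ^ (2 * i)) = (if u * u = 1 then 1 else -1)"
proof -
  define N :: nat where "N = (3 ^ m + 1) div 2 - 1"
  have N: "2 * (N + 1) = 3 ^ m + 1"
    unfolding N_def using three_power_ge_3 by (auto elim!: evenE)
  have "(\<Sum>i = 1..N. u ^ (2 * i)) = (if u * u = 1 then 1 else -1)"
  proof (cases "u * u = 1")
    case True
    have sum_eq: "(\<Sum>i = 1..N. u ^ (2 * i)) = of_nat N"
      using True by (simp add: power_mult power2_eq_square)
    have "2 * (of_nat N :: 'a) + 2 = 1"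
      using arg_cong[OF N, of "of_nat :: nat \<Rightarrow> 'a"] three_eq_0 m_pos
      by (simp add: algebra_simps zero_power)
    moreover have "2 * (of_nat N - 1 :: 'a) = (2 * of_nat N + 2) - 1 - 3"
      by (simp add: algebra_simps)
    ultimately have "2 * (of_nat N - 1 :: 'a) = 0"
      using three_eq_0 by simp
    then show ?thesis
      using sum_eq True two_neq_0 by simp
  next
    case False
    have "(u * u - 1) * (\<Sum>i = 1..N. u ^ (2 * i)) = u ^ (2 * (N + 1)) - u * u"
      by (induction N) (simp_all add: algebra_simps power_mult power2_eq_square)
    also have "\<dots> = (u * u - 1) * (-1)"
      using assms by (simp only: N) (simp add: unit_circle_def)
    finally show ?thesis
      using False by (subst (asm) mult_left_cancel) auto
  qed
  then show ?thesis
    by (simp add: N_def)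
qed

lemma circle_char_sum_eq_kloosterman:
  assumes "gcd s (3 ^ m + 1) = 1" "(a::'a) \<noteq> 0"
  shows "circle_char_sum
      (\<lambda>u. \<Sum>i = 1..(3 ^ m + 1) div 2 - 1. tr (2 * m) (a * u powi (2 * int i + s)))
    = 1 - kloosterman m (a ^ (3 ^ m + 1))"
proof -
  txt \<open>\<open>\<sigma>\<close> swaps \<open>\<plusminus>1\<close>, where the geometric sum is \<open>1\<close> instead of \<open>-1\<close>; this needs \<open>s\<close> odd.\<close>
  define \<sigma> where "\<sigma> u = (if u * u = 1 then - u else u)" for u :: 'a
  have "odd s"
  proof
    assume "even s"
    then have "2 dvd gcd s (3 ^ m + 1)"
      by simp
    with assms(1) show False
      by simp
  qed
  have "(\<Sum>i = 1..(3 ^ m + 1) div 2 - 1. tr (2 * m) (a * u powi (2 * int i + s))) =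
      tr (2 * m) (- a * \<sigma> u powi s)" if "u \<in> unit_circle" for u
  proof -
    have "u powi (2 * int i + s) = u powi s * u ^ (2 * i)" for i
      using unit_circle_nonzero[OF that]
      by (simp add: power_int_add mult.commute flip: power_int_of_nat)
    then have "(\<Sum>i = 1..(3 ^ m + 1) div 2 - 1. tr (2 * m) (a * u powi (2 * int i + s))) =
        tr (2 * m) (a * u powi s * (\<Sum>i = 1..(3 ^ m + 1) div 2 - 1. u ^ (2 * i)))"
      by (simp add: tr_sum sum_distrib_left mult.assoc)
    also have "\<dots> = tr (2 * m) (a * u powi s * (if u * u = 1 then 1 else -1))"
      by (simp only: sum_even_powers_unit_circle[OF that])
    also have "\<dots> = tr (2 * m) (- a * \<sigma> u powi s)"
      using \<open>odd s\<close> by (simp add: \<sigma>_def)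
    finally show ?thesis .
  qed
  then have "circle_char_sum
      (\<lambda>u. \<Sum>i = 1..(3 ^ m + 1) div 2 - 1. tr (2 * m) (a * u powi (2 * int i + s)))
      = (\<Sum>u\<in>unit_circle. chi (tr (2 * m) (- a * \<sigma> u powi s)))"
    by (simp add: circle_char_sum_def)
  also have "\<dots> = (\<Sum>u\<in>unit_circle. chi (tr (2 * m) (- a * u powi s)))"
    by (rule sum.reindex_bij_witness[where i=\<sigma> and j=\<sigma>])
       (auto simp: \<sigma>_def unit_circle_def)
  also have "\<dots> = (\<Sum>u\<in>unit_circle. chi (tr (2 * m) (- a * u)))"
    using sum_unit_circle_powi_coprime[OF assms(1), of "\<lambda>w. chi (tr (2 * m) (- a * w))"] .
  also have "\<dots> = 1 - kloosterman m (a ^ (3 ^ m + 1))"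
    using sum_unit_circle_chi_tr_eq_kloosterman[of "- a"] assms(2) by simp
  finally show ?thesis .
qed

end

theorem corollary8:
  fixes m :: nat and s :: int and a :: "'a::{field,finite}" and f :: "'a \<Rightarrow> 'a"
  assumes "m > 0"
    and "card (UNIV :: 'a set) = 3 ^ (2 * m)"
    and "gcd s (3 ^ m + 1) = 1"
    and "a \<noteq> 0"
    and "\<And>x. f x = (if x = 0 then 0 else
           (\<Sum>i = 1..(3 ^ m + 1) div 2 - 1.
              tr (2 * m) (a * x powi ((2 * int i + s) * (3 ^ m - 1)))))"
  shows "regular_bent (2 * m) f \<longleftrightarrow> kloosterman m (a ^ (3 ^ m + 1)) = 0"
proof -
  interpret gf_3_2m "TYPE('a)" m
    using assms(1,2) by unfold_locales
  define g where "g u = (\<Sum>i = 1..(3 ^ m + 1) div 2 - 1. tr (2 * m) (a * u powi (2 * int i + s)))"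
    for u
  have "(3::int) ^ m - 1 = int (3 ^ m - 1)"
    by (simp add: of_nat_diff)
  then have "f x = g (x ^ (3 ^ m - 1))" if "x \<noteq> 0" for x
    using assms(5) that by (simp add: g_def power_int_power mult.commute)
  moreover have "f 0 = 0"
    using assms(5) by simp
  moreover have "g u \<in> prime_field" for u
    unfolding g_def tr_sum[symmetric] by (rule tr_in_prime_field_2m)
  ultimately have "regular_bent (2 * m) f \<longleftrightarrow> circle_char_sum g = 1"
    by (rule regular_bent_iff_circle_char_sum_eq_1)
  also have "circle_char_sum g = 1 - kloosterman m (a ^ (3 ^ m + 1))"
    unfolding g_def by (rule circle_char_sum_eq_kloosterman[OF assms(3,4)])
  finally show ?thesis
    by simp
qed

end
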